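(* Let $\mathcal f:S\to T$ be a simulation with cut-off $\Delta$ and shift $\Gamma$. Then $\mathrm{Im}(H_T)_{<\Delta}=\mathrm{Im}(H_S-\Gamma)_{<\Delta}$, where for a real-valued function $H$, $\mathrm{Im}(H)_{<\Delta}=\{\xi\in\mathrm{Im}(H):\xi<\Delta\}$.
   Context: A spin system $S=(q_S,V_S,E_S,J_S)$: integer $q_S\ge2$, finite set $V_S$, hyperedges $E_S\subseteq\mathcal P(V_S)$ covering $V_S$, $J_S(e):[q_S]^e\to\mathbb R_{\ge0}$. $\mathcal C_S=[q_S]^{V_S}$, $H_S(\vec s)=\sum_eJ_S(e)(\vec s|_e)$. A simulation $\mathcal f:S\to T$ consists of a cut-off $\Delta>0$, shift $\Gamma\in\mathbb R$, degeneracy $d\in\mathbb N$, $P:V_T\to V_S^k$ (components $P^{(i)}$), $\mathrm{dec}:[q_S]^k\to[q_T]$, and $\mathrm{enc}=(\mathrm{enc}_i:[q_T]\to[q_S]^k)_{i=1,\dots,m}$, satisfying: (1) $P^{(i)}(v)=P^{(j)}(w)\Rightarrow i=j,\ v=w$; (2) $\mathrm{dec}\circ\mathrm{enc}_i=\mathrm{id}$; (3) $\mathrm{enc}_i(t)=\mathrm{enc}_j(t)$ for some $t$ implies $i=j$; (4) with $\mathrm{sim}_i(\vec t)=\{\vec s\in\mathcal C_S:\vec s\circ P=\mathrm{enc}_i\circ\vec t,\ H_S(\vec s)-\Gamma<\Delta\}$ (where $(\vec s\circ P)(v)=(\vec s(P^{(1)}(v)),\dots,\vec s(P^{(k)}(v)))$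 and $(\mathrm{enc}_i\circ\vec t)(v)=\mathrm{enc}_i(\vec t(v))$), $|\mathrm{sim}_i(\vec t)|=d$ whenever $H_T(\vec t)<\Delta$; (5) $H_S(\vec s)-\Gamma=H_T(\vec t)$ for $\vec s\in\bigcup_i\mathrm{sim}_i(\vec t)$, and $H_S(\vec s)-\Gamma\ge\Delta$ for every $\vec s$ in no $\mathrm{sim}_i(\vec t)$. *)

theory Defs
  imports Complex_Main "HOL-Library.FuncSet"
begin

text \<open>Spins take values in [q] = {1..q}. An interaction J e is a function on
configurations of the hyperedge e (extensional functions e -> [q]).\<close>

record 'v spin_system =
  sq :: nat
  sV :: "'v set"
  sE :: "'v set set"
  sJ :: "'v set \<Rightarrow> ('v \<Rightarrow> nat) \<Rightarrow> real"

definition spin_system :: "'v spin_system \<Rightarrow> bool" where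
  "spin_system S \<longleftrightarrow>
     sq S \<ge> 2 \<and> finite (sV S) \<and> sE S \<subseteq> Pow (sV S) \<and> \<Union>(sE S) = sV S \<and>
     (\<forall>e\<in>sE S. \<forall>\<sigma>\<in>PiE e (\<lambda>_. {1..sq S}). sJ S e \<sigma> \<ge> 0)"

definition configs :: "'v spin_system \<Rightarrow> ('v \<Rightarrow> nat) set" where
  "configs S = PiE (sV S) (\<lambda>_. {1..sq S})"

definition hamiltonian :: "'v spin_system \<Rightarrow> ('v \<Rightarrow> nat) \<Rightarrow> real" where
  "hamiltonian S s = (\<Sum>e\<in>sE S. sJ S e (restrict s e))"

text \<open>Tuples in [q]^k are extensional functions {1..k} -> [q].
P v i is the i-th component P^(i)(v); enc i is enc_i for i in {1..m}.\<close>

definition sim_set ::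
  "'v spin_system \<Rightarrow> 'w spin_system \<Rightarrow> real \<Rightarrow> real \<Rightarrow> nat \<Rightarrow> ('w \<Rightarrow> nat \<Rightarrow> 'v)
   \<Rightarrow> (nat \<Rightarrow> nat \<Rightarrow> nat \<Rightarrow> nat) \<Rightarrow> nat \<Rightarrow> ('w \<Rightarrow> nat) \<Rightarrow> ('v \<Rightarrow> nat) set" where
  "sim_set S T \<Delta> \<Gamma> k P enc i t =
     {s \<in> configs S.
        (\<lambda>v\<in>sV T. \<lambda>j\<in>{1..k}. s (P v j)) = (\<lambda>v\<in>sV T. enc i (t v)) \<and>
        hamiltonian S s - \<Gamma> < \<Delta>}"

definition is_simulation ::
  "'v spin_system \<Rightarrow> 'w spin_system \<Rightarrow> real \<Rightarrow> real \<Rightarrow> nat \<Rightarrow> nat \<Rightarrow> ('w \<Rightarrow> nat \<Rightarrow> 'v)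
   \<Rightarrow> ((nat \<Rightarrow> nat) \<Rightarrow> nat) \<Rightarrow> nat \<Rightarrow> (nat \<Rightarrow> nat \<Rightarrow> nat \<Rightarrow> nat) \<Rightarrow> bool" where
  "is_simulation S T \<Delta> \<Gamma> d k P dec m enc \<longleftrightarrow>
     spin_system S \<and> spin_system T \<and> \<Delta> > 0 \<and> d \<ge> 1 \<and> m \<ge> 1 \<and>
     (\<forall>v\<in>sV T. \<forall>i\<in>{1..k}. P v i \<in> sV S) \<and>
     (\<forall>x\<in>PiE {1..k} (\<lambda>_. {1..sq S}). dec x \<in> {1..sq T}) \<and>
     (\<forall>i\<in>{1..m}. \<forall>t\<in>{1..sq T}. enc i t \<in> PiE {1..k} (\<lambda>_. {1..sq S})) \<and>
     (\<forall>i\<in>{1..k}. \<forall>j\<in>{1..k}. \<forall>v\<in>sV T. \<forall>w\<in>sV T. P v i = P w j \<longrightarrow> i = j \<and> v = w) \<and>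
     (\<forall>i\<in>{1..m}. \<forall>t\<in>{1..sq T}. dec (enc i t) = t) \<and>
     (\<forall>i\<in>{1..m}. \<forall>j\<in>{1..m}. (\<exists>t\<in>{1..sq T}. enc i t = enc j t) \<longrightarrow> i = j) \<and>
     (\<forall>t\<in>configs T. \<forall>i\<in>{1..m}. hamiltonian T t < \<Delta> \<longrightarrow>
         card (sim_set S T \<Delta> \<Gamma> k P enc i t) = d) \<and>
     (\<forall>t\<in>configs T. \<forall>i\<in>{1..m}. \<forall>s\<in>sim_set S T \<Delta> \<Gamma> k P enc i t.
         hamiltonian S s - \<Gamma> = hamiltonian T t) \<and>
     (\<forall>s\<in>configs S. (\<forall>t\<in>configs T. \<forall>i\<in>{1..m}. s \<notin> sim_set S T \<Delta> \<Gamma> k P enc i t) \<longrightarrow>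
         hamiltonian S s - \<Gamma> \<ge> \<Delta>)"

end

theory Submission
  imports Defs
begin

text \<open>Every target configuration of energy below the cut-off is simulated by d \<ge> 1
source configurations, each with the same shifted energy; conversely a source
configuration of shifted energy below the cut-off must simulate some target
configuration, since otherwise its shifted energy would be at least the cut-off.\<close>

lemma sim_set_subset_configs: "sim_set S T \<Delta> \<Gamma> k P enc i t \<subseteq> configs S"
  by (auto simp: sim_set_def)

lemma simulation_sim_set_nonempty:
  assumes "is_simulation S T \<Delta> \<Gamma> d k P dec m enc"
    and "t \<in> configs T" and "i \<in> {1..m}" and "hamiltonian T t < \<Delta>"
  shows "sim_set S T \<Delta> \<Gamma> k P enc i t \<noteq> {}"
proof -
  have "card (sim_set S T \<Delta> \<Gamma> k P enc i t) = d" and "d \<ge> 1"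
    using assms unfolding is_simulation_def by blast+
  then show ?thesis by auto
qed

lemma simulation_shifted_energy_eq:
  assumes "is_simulation S T \<Delta> \<Gamma> d k P dec m enc"
    and "t \<in> configs T" and "i \<in> {1..m}" and "s \<in> sim_set S T \<Delta> \<Gamma> k P enc i t"
  shows "hamiltonian S s - \<Gamma> = hamiltonian T t"
  using assms unfolding is_simulation_def by blast

lemma simulation_low_energy_simulates:
  assumes "is_simulation S T \<Delta> \<Gamma> d k P dec m enc"
    and "s \<in> configs S" and "hamiltonian S s - \<Gamma> < \<Delta>"
  obtains t i where "t \<in> configs T" and "i \<in> {1..m}" and "s \<in> sim_set S T \<Delta> \<Gamma> k P enc i t"
  using assms unfolding is_simulation_def by (meson not_less)

lemma simulation_low_spectrum_target_subset:
  assumes sim: "is_simulation S T \<Delta> \<Gamma> d k P dec m enc"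
  shows "{\<xi> \<in> hamiltonian T ` configs T. \<xi> < \<Delta>} \<subseteq>
         {\<xi> \<in> (\<lambda>s. hamiltonian S s - \<Gamma>) ` configs S. \<xi> < \<Delta>}"
proof clarify
  fix t assume t: "t \<in> configs T" "hamiltonian T t < \<Delta>"
  have "m \<ge> 1"
    using sim unfolding is_simulation_def by blast
  then have one: "1 \<in> {1..m}" by simp
  obtain s where s: "s \<in> sim_set S T \<Delta> \<Gamma> k P enc 1 t"
    using simulation_sim_set_nonempty[OF sim t(1) one t(2)] by blast
  have "hamiltonian T t = hamiltonian S s - \<Gamma>"
    using simulation_shifted_energy_eq[OF sim t(1) one s] by simp
  moreover have "s \<in> configs S"
    using s sim_set_subset_configs by blast
  ultimately show "hamiltonian T t \<in> (\<lambda>s. hamiltonian S s - \<Gamma>) ` configs S"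
    by blast
qed

lemma simulation_low_spectrum_source_subset:
  assumes sim: "is_simulation S T \<Delta> \<Gamma> d k P dec m enc"
  shows "{\<xi> \<in> (\<lambda>s. hamiltonian S s - \<Gamma>) ` configs S. \<xi> < \<Delta>} \<subseteq>
         {\<xi> \<in> hamiltonian T ` configs T. \<xi> < \<Delta>}"
proof clarify
  fix s assume s: "s \<in> configs S" "hamiltonian S s - \<Gamma> < \<Delta>"
  obtain t i where t: "t \<in> configs T" "i \<in> {1..m}" "s \<in> sim_set S T \<Delta> \<Gamma> k P enc i t"
    using simulation_low_energy_simulates[OF sim s] .
  then have "hamiltonian S s - \<Gamma> = hamiltonian T t"
    by (rule simulation_shifted_energy_eq[OF sim])
  with t(1) show "hamiltonian S s - \<Gamma> \<in> hamiltonian T ` configs T"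
    by blast
qed

theorem mainTheorem11:
  fixes S :: "'v spin_system" and T :: "'w spin_system"
  assumes "is_simulation S T \<Delta> \<Gamma> d k P dec m enc"
  shows "{\<xi> \<in> hamiltonian T ` configs T. \<xi> < \<Delta>} =
         {\<xi> \<in> (\<lambda>s. hamiltonian S s - \<Gamma>) ` configs S. \<xi> < \<Delta>}"
  using simulation_low_spectrum_target_subset[OF assms]
    simulation_low_spectrum_source_subset[OF assms]
  by (rule equalityI)

end
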